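(* Let $\zeta_5=e^{2\pi i/5}$, let $A=\theta[1;\tfrac15]$ and $B=\theta[1;\tfrac35]$ (theta constants, functions of $\tau$), and for $k\in\{1,3,5,7,9\}$ let $g_k=\theta[\tfrac35;\tfrac k5](\zeta,\tau)$. Then for every $(\zeta,\tau)\in\mathbb{C}\times\mathbb{H}^2$: $$B^2g_1g_9-A^2g_3g_7+ABg_5^2=0,$$ $$\zeta_5A^2g_3g_9-\zeta_5B^2g_5g_7+ABg_1^2=0,$$ $$B^2g_1g_3+\zeta_5A^2g_5g_9-\zeta_5ABg_7^2=0,$$ $$A^2g_1g_5+\zeta_5B^2g_7g_9-ABg_3^2=0,$$ $$A^2g_1g_7-B^2g_3g_5+\zeta_5ABg_9^2=0.$$
   Context: Let $\mathbb{H}^2=\{\tau\in\mathbb{C}:\Im\tau>0\}$. For $(\epsilon,\epsilon')\in\mathbb{R}^2$, $$\theta[\epsilon;\epsilon'](\zeta,\tau)=\sum_{n\in\mathbb{Z}}\exp\Big(2\pi i\Big[\tfrac12\big(n+\tfrac{\epsilon}{2}\big)^2\tau+\big(n+\tfrac{\epsilon}{2}\big)\big(\zeta+\tfrac{\epsilon'}{2}\big)\Big]\Big),$$ and $\theta[\epsilon;\epsilon']=\theta[\epsilon;\epsilon'](0,\tau)$ denotes the theta constant. *)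

theory Defs
  imports "HOL-Analysis.Analysis"
begin

definition theta_char :: "real \<Rightarrow> real \<Rightarrow> complex \<Rightarrow> complex \<Rightarrow> complex" where
  "theta_char e e' z t =
     (\<Sum>\<^sub>\<infinity>n::int. exp (2 * of_real pi * \<i> *
        ((1/2) * (of_int n + of_real e / 2)^2 * t
         + (of_int n + of_real e / 2) * (z + of_real e' / 2))))"

definition theta_const :: "real \<Rightarrow> real \<Rightarrow> complex \<Rightarrow> complex" where
  "theta_const e e' t = theta_char e e' 0 t"

end

theory Submission
  imports Defs
begin

text \<open>
  A product of four theta series with characteristics is a Gaussian sum over a coset of \<open>\<int>\<^sup>4\<close>
  in \<open>\<real>\<^sup>4\<close>. The two cosets \<open>(1/2,1/2,3/10,3/10) + \<int>\<^sup>4\<close> and \<open>(0,0,4/5,4/5) + \<int>\<^sup>4\<close>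
  make up a translate of the dual \<open>D\<^sub>4\<^sup>*\<close> of the \<open>D\<^sub>4\<close> root lattice, and the sum over
  this translate, taken at the characteristics \<open>c\<close> and \<open>c + (1,0,0,0)\<close>, differs by twice the
  product over the half-integral coset. The sum over the translated lattice is invariant under
  the orthogonal maps preserving it and the vector \<open>(0,0,1,1)\<close> (a rotation of order 3, a sign
  change, two transpositions) and only picks up a root of unity when the characteristic is
  shifted by a vector of \<open>D\<^sub>4\<close>; chaining these symmetries, the six sums coming from the three
  terms of the first relation cancel in pairs (Riemann's theta relation in this special case).
  The translation \<open>\<zeta> \<mapsto> \<zeta> + 1/5\<close> sends \<open>g\<^sub>k\<close> to \<open>g\<^sub>k\<^sub>+\<^sub>2\<close>, and \<open>g\<^sub>k\<^sub>+\<^sub>1\<^sub>0 = e(3/10) g\<^sub>k\<close>, so the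
  first relation evaluated at \<open>\<zeta> + j/5\<close>, \<open>j = 1, \<dots>, 4\<close>, gives the other four.
\<close>

definition e2pi :: "real \<Rightarrow> complex" where
  "e2pi r = exp (2 * of_real pi * \<i> * of_real r)"

lemma e2pi_add: "e2pi (a + b) = e2pi a * e2pi b"
  unfolding e2pi_def by (simp add: distrib_left exp_add[symmetric])

lemma e2pi_int: "r \<in> \<int> \<Longrightarrow> e2pi r = 1"
  unfolding e2pi_def using exp_integer_2pi[of r] by (simp add: mult_ac)

lemma e2pi_eq_if_diff_int: "x - y \<in> \<int> \<Longrightarrow> e2pi x = e2pi y"
  using e2pi_add[of "x - y" y] e2pi_int by simp

lemma e2pi_zero [simp]: "e2pi 0 = 1"
  unfolding e2pi_def by simp

lemma e2pi_half: "e2pi (1/2) = -1"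
  unfolding e2pi_def by simp

definition gauss_term :: "complex \<Rightarrow> complex \<Rightarrow> real \<Rightarrow> real \<Rightarrow> complex" where
  "gauss_term t z c x = exp (2 * of_real pi * \<i> * ((1/2) * (of_real x)^2 * t + of_real x * (z + of_real c)))"

definition theta_series :: "complex \<Rightarrow> complex \<Rightarrow> real \<Rightarrow> real \<Rightarrow> complex" where
  "theta_series t z c a = (\<Sum>\<^sub>\<infinity>n::int. gauss_term t z c (of_int n + a))"

lemma theta_char_eq_theta_series: "theta_char e e' z t = theta_series t z (e'/2) (e/2)"
  unfolding theta_char_def theta_series_def gauss_term_def by simp

lemma theta_char_translate: "theta_char e e' (z + of_real w) t = theta_char e (e' + 2 * w) z t"
  unfolding theta_char_def by (simp add: field_simps)

lemma theta_char_add_2: "theta_char e (e' + 2) z t = e2pi (e/2) * theta_char e e' z t"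
proof -
  have "exp (2 * of_real pi * \<i> * ((1/2) * (of_int n + of_real e / 2)^2 * t
          + (of_int n + of_real e / 2) * (z + of_real (e' + 2) / 2)))
      = exp (2 * of_real pi * \<i> * ((1/2) * (of_int n + of_real e / 2)^2 * t
          + (of_int n + of_real e / 2) * (z + of_real e' / 2))) * e2pi (e/2)" (is "exp ?l = exp ?r * _")
    for n :: int
  proof -
    have "?l = ?r + 2 * of_real pi * \<i> * of_real (of_int n + e/2)"
      by (simp add: field_simps)
    moreover have "e2pi (of_int n + e/2) = e2pi (e/2)"
      by (rule e2pi_eq_if_diff_int) simp
    ultimately show ?thesis
      by (simp only: exp_add e2pi_def)
  qed
  then show ?thesis
    unfolding theta_char_def by (simp add: infsum_cmult_right' mult.commute)
qed

lemma theta_char_add_even: "theta_char e (e' + 2 * real q) z t = e2pi (e/2) ^ q * theta_char e e' z t"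
proof (induction q)
  case (Suc q)
  have "e' + 2 * real (Suc q) = (e' + 2 * real q) + 2"
    by simp
  then show ?case
    using Suc by (simp only: theta_char_add_2) simp
qed simp

lemma theta_char_translate_fifth:
  "theta_char e (real k / 5) (z + of_real (real j / 5)) t =
     e2pi (e/2) ^ ((k + 2 * j) div 10) * theta_char e (real ((k + 2 * j) mod 10) / 5) z t"
proof -
  have "real (k + 2 * j) = real ((k + 2 * j) mod 10) + 10 * real ((k + 2 * j) div 10)"
    by (metis mod_mult_div_eq of_nat_add of_nat_mult of_nat_numeral)
  then have "real k / 5 + 2 * (real j / 5) = real ((k + 2 * j) mod 10) / 5 + 2 * real ((k + 2 * j) div 10)"
    by (simp add: field_simps)
  then show ?thesis
    by (simp only: theta_char_translate theta_char_add_even)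
qed

subsection \<open>Convergence\<close>

lemma summable_on_exp_neg_abs_int: "(\<lambda>n::int. exp (- \<bar>real_of_int n\<bar>)) summable_on UNIV"
proof -
  have "summable (\<lambda>n::nat. exp (-1::real) ^ n)"
    by (rule summable_geometric) simp
  then have geom: "(\<lambda>n::nat. exp (- real n)) summable_on UNIV"
    by (simp add: summable_on_UNIV_nonneg_real_iff exp_of_nat_mult[symmetric])
  have "(\<lambda>n::int. exp (- \<bar>real_of_int n\<bar>)) summable_on range int"
    by (subst summable_on_reindex) (simp_all add: o_def geom)
  moreover have "(\<lambda>n::int. exp (- \<bar>real_of_int n\<bar>)) summable_on range (\<lambda>n. - int n)"
    by (subst summable_on_reindex) (simp_all add: o_def geom inj_on_def)
  moreover have "range int \<union> range (\<lambda>n. - int n) = UNIV"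
  proof (intro set_eqI iffI)
    fix n :: int
    show "n \<in> range int \<union> range (\<lambda>n. - int n)"
      by (cases "n \<ge> 0") (auto intro: range_eqI[of n int "nat n"] range_eqI[of n _ "nat (- n)"])
  qed simp
  ultimately show ?thesis
    by (metis summable_on_union)
qed

lemma norm_gauss_term: "norm (gauss_term t z c x) = exp (- pi * Im t * x^2 - 2 * pi * x * Im z)"
  unfolding gauss_term_def by (simp add: power2_eq_square algebra_simps)

lemma quadratic_le_neg_abs:
  fixes a b x :: real
  assumes "a > 0"
  shows "- a * x^2 + b * x \<le> (\<bar>b\<bar> + 1)^2 / (4 * a) - \<bar>x\<bar>"
proof -
  define m where "m = (\<bar>b\<bar> + 1) / (2 * a)"
  have "0 \<le> a * (\<bar>x\<bar> - m)^2"
    using assms by simp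
  also have "a * (\<bar>x\<bar> - m)^2 = a * x^2 - (\<bar>b\<bar> + 1) * \<bar>x\<bar> + (\<bar>b\<bar> + 1)^2 / (4 * a)"
    using assms unfolding m_def by (simp add: power2_eq_square field_simps)
  finally show ?thesis
    using abs_ge_self[of "b * x"] by (simp add: abs_mult algebra_simps)
qed

lemma summable_on_norm_gauss_term:
  assumes "Im t > 0"
  shows "(\<lambda>n::int. norm (gauss_term t z c (of_int n + s))) summable_on UNIV"
proof (rule summable_on_comparison_test)
  define K where "K = (\<bar>- 2 * pi * Im z\<bar> + 1)^2 / (4 * (pi * Im t))"
  show "(\<lambda>n::int. exp (K + \<bar>s\<bar>) * exp (- \<bar>real_of_int n\<bar>)) summable_on UNIV"
    by (rule summable_on_cmult_right[OF summable_on_exp_neg_abs_int])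
  fix n :: int
  let ?x = "real_of_int n + s"
  have "- (pi * Im t) * ?x^2 + (- 2 * pi * Im z) * ?x \<le> K - \<bar>?x\<bar>"
    unfolding K_def by (rule quadratic_le_neg_abs) (use assms in simp)
  moreover have "- \<bar>?x\<bar> \<le> \<bar>s\<bar> - \<bar>real_of_int n\<bar>"
    by linarith
  ultimately show "norm (gauss_term t z c ?x) \<le> exp (K + \<bar>s\<bar>) * exp (- \<bar>real_of_int n\<bar>)"
    by (simp add: norm_gauss_term exp_add[symmetric] algebra_simps)
qed simp

lemma
  fixes f :: "'a \<Rightarrow> 'c::{real_normed_field,banach}" and g :: "'b \<Rightarrow> 'c"
  assumes f: "(\<lambda>x. norm (f x)) summable_on A" and g: "(\<lambda>y. norm (g y)) summable_on B"
  shows summable_on_norm_Times_mult: "(\<lambda>p. norm (case p of (x,y) \<Rightarrow> f x * g y)) summable_on A \<times> B"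
    and infsum_Times_mult: "(\<Sum>\<^sub>\<infinity>(x,y)\<in>A \<times> B. f x * g y) = infsum f A * infsum g B"
proof -
  have "(\<lambda>p. norm ((\<lambda>(x,y). f x * g y) p)) summable_on Sigma A (\<lambda>_. B)"
  proof (rule Infinite_Sum.abs_summable_on_Sigma_iff[THEN iffD2], intro conjI ballI)
    fix x
    show "(\<lambda>y. norm ((\<lambda>(x,y). f x * g y) (x, y))) summable_on B"
      using summable_on_cmult_right[OF g, of "norm (f x)"] by (simp add: norm_mult)
  next
    have "infsum (\<lambda>y. norm (f x * g y)) B = norm (f x) * infsum (\<lambda>y. norm (g y)) B" for x
      by (simp add: norm_mult infsum_cmult_right')
    then show "(\<lambda>x. norm (infsum (\<lambda>y. norm ((\<lambda>(x,y). f x * g y) (x, y))) B)) summable_on A"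
      using summable_on_cmult_left[OF f] by (simp add: abs_mult infsum_nonneg)
  qed
  then show norm_summable: "(\<lambda>p. norm (case p of (x,y) \<Rightarrow> f x * g y)) summable_on A \<times> B"
    by simp
  have "(\<lambda>(x,y). f x * g y) summable_on A \<times> B"
    using abs_summable_summable norm_summable by blast
  then have "(\<Sum>\<^sub>\<infinity>(x,y)\<in>A \<times> B. f x * g y) = (\<Sum>\<^sub>\<infinity>x\<in>A. \<Sum>\<^sub>\<infinity>y\<in>B. f x * g y)"
    using infsum_Sigma'_banach[of "\<lambda>x y. f x * g y" A "\<lambda>_. B"] by simp
  then show "(\<Sum>\<^sub>\<infinity>(x,y)\<in>A \<times> B. f x * g y) = infsum f A * infsum g B"
    by (simp add: infsum_cmult_right' infsum_cmult_left')
qed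

subsection \<open>Gaussian sums over a translate of the dual \<open>D\<^sub>4\<close> lattice\<close>

type_synonym r4 = "real \<times> real \<times> real \<times> real"

definition theta_kernel :: "complex \<Rightarrow> complex \<Rightarrow> r4 \<Rightarrow> r4 \<Rightarrow> complex" where
  "theta_kernel t z c w =
     exp (2 * of_real pi * \<i> * (of_real (w \<bullet> w) / 2 * t + of_real (w \<bullet> (0,0,1,1)) * z)) * e2pi (c \<bullet> w)"

lemma theta_kernel_eq_mult:
  "theta_kernel t z (c1,c2,c3,c4) (w1,w2,w3,w4) =
     gauss_term t 0 c1 w1 * (gauss_term t 0 c2 w2 * (gauss_term t z c3 w3 * gauss_term t z c4 w4))"
  unfolding theta_kernel_def gauss_term_def e2pi_def
  by (simp add: exp_add[symmetric] power2_eq_square ring_distribs mult_ac add_ac add_divide_distrib)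

lemma theta_kernel_add_char: "theta_kernel t z (c + k) w = e2pi (k \<bullet> w) * theta_kernel t z c w"
  unfolding theta_kernel_def by (simp add: inner_add_left e2pi_add)

lemma infsum_theta_kernel_add_char:
  assumes "\<And>w. w \<in> S \<Longrightarrow> e2pi (k \<bullet> w) = u"
  shows "infsum (theta_kernel t z (c + k)) S = u * infsum (theta_kernel t z c) S"
  using assms by (simp add: theta_kernel_add_char infsum_cmult_right'[symmetric] cong: infsum_cong)

definition of_int4 :: "int \<times> int \<times> int \<times> int \<Rightarrow> r4" where
  "of_int4 = (\<lambda>(n1,n2,n3,n4). (of_int n1, of_int n2, of_int n3, of_int n4))"

definition int_coset :: "r4 \<Rightarrow> r4 set" where
  "int_coset a = range (\<lambda>n. of_int4 n + a)"

lemma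
  assumes "Im t > 0"
  shows summable_on_theta_kernel_int_coset: "theta_kernel t z c summable_on int_coset a"
    and infsum_theta_kernel_int_coset:
      "infsum (theta_kernel t z (c1,c2,c3,c4)) (int_coset (a1,a2,a3,a4)) =
         theta_series t 0 c1 a1 * (theta_series t 0 c2 a2 * (theta_series t z c3 a3 * theta_series t z c4 a4))"
proof -
  have inj: "inj (\<lambda>n. of_int4 n + a)" for a
    by (auto simp: inj_def of_int4_def)
  have UNIV4: "(UNIV :: (int \<times> int \<times> int \<times> int) set) = UNIV \<times> (UNIV \<times> (UNIV \<times> UNIV))"
    by simp
  have comp: "theta_kernel t z (c1,c2,c3,c4) \<circ> (\<lambda>n. of_int4 n + (a1,a2,a3,a4)) =
    (\<lambda>(n1,p). f1 n1 * (\<lambda>(n2,q). f2 n2 * (\<lambda>(n3,n4). f3 n3 * f4 n4) q) p)"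
    if "f1 = (\<lambda>n. gauss_term t 0 c1 (of_int n + a1))" "f2 = (\<lambda>n. gauss_term t 0 c2 (of_int n + a2))"
       "f3 = (\<lambda>n. gauss_term t z c3 (of_int n + a3))" "f4 = (\<lambda>n. gauss_term t z c4 (of_int n + a4))"
    for f1 f2 f3 f4 c1 c2 c3 c4 a1 a2 a3 a4
    using that by (auto simp: fun_eq_iff of_int4_def theta_kernel_eq_mult)
  have norm: "(\<lambda>n::int. norm (gauss_term t z' c' (of_int n + s))) summable_on UNIV" for z' c' s
    using summable_on_norm_gauss_term[OF assms] .
  note s34 = summable_on_norm_Times_mult[OF norm norm]
  note s234 = summable_on_norm_Times_mult[OF norm s34]
  note s1234 = summable_on_norm_Times_mult[OF norm s234]
  show "infsum (theta_kernel t z (c1,c2,c3,c4)) (int_coset (a1,a2,a3,a4)) =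
         theta_series t 0 c1 a1 * (theta_series t 0 c2 a2 * (theta_series t z c3 a3 * theta_series t z c4 a4))"
    unfolding int_coset_def infsum_reindex[OF inj_on_subset[OF inj subset_UNIV]] comp[OF refl refl refl refl] UNIV4
    using infsum_Times_mult[OF norm s234] infsum_Times_mult[OF norm s34] infsum_Times_mult[OF norm norm]
    unfolding theta_series_def by simp
  obtain c1 c2 c3 c4 a1 a2 a3 a4 where ca: "c = (c1,c2,c3,c4)" "a = (a1,a2,a3,a4)"
    using prod_cases4 by metis
  have "(theta_kernel t z c \<circ> (\<lambda>n. of_int4 n + a)) summable_on UNIV"
    unfolding ca comp[OF refl refl refl refl] UNIV4 using s1234 abs_summable_summable by blast
  then show "theta_kernel t z c summable_on int_coset a"
    unfolding int_coset_def by (subst summable_on_reindex) (simp_all add: inj)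
qed

definition lattice_point :: "int \<Rightarrow> int \<Rightarrow> int \<Rightarrow> int \<Rightarrow> r4" where
  "lattice_point a b c d = (a/2, b + a/2, c + a/2 - 1/5, d + a/2 - 1/5)"

text \<open>The set of all \<open>lattice_point\<close>s is \<open>D\<^sub>4\<^sup>* - (0,0,1/5,1/5)\<close>, where
  \<open>D\<^sub>4\<^sup>* = \<int>\<^sup>4 \<union> (\<int>\<^sup>4 + (1/2,1/2,1/2,1/2))\<close>.\<close>

definition theta_lattice :: "r4 set" where
  "theta_lattice = {lattice_point a b c d | a b c d. True}"

lemma lattice_point_in_theta_lattice [simp]: "lattice_point a b c d \<in> theta_lattice"
  unfolding theta_lattice_def by blast

lemma theta_latticeE:
  assumes "w \<in> theta_lattice"
  obtains a b c d where "w = lattice_point a b c d"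
  using assms unfolding theta_lattice_def by blast

lemma theta_lattice_eq_Un:
  "theta_lattice = int_coset (1/2, 1/2, 3/10, 3/10) \<union> int_coset (0, 0, 4/5, 4/5)"
proof (intro equalityI subsetI)
  fix w assume "w \<in> theta_lattice"
  then obtain a b c d where w: "w = lattice_point a b c d"
    by (rule theta_latticeE)
  show "w \<in> int_coset (1/2, 1/2, 3/10, 3/10) \<union> int_coset (0, 0, 4/5, 4/5)"
  proof (cases "even a")
    case True
    then obtain m where "a = 2 * m" by blast
    then have "w = of_int4 (m, b + m, c + m - 1, d + m - 1) + (0, 0, 4/5, 4/5)"
      unfolding w lattice_point_def of_int4_def by simp
    then show ?thesis unfolding int_coset_def by blast
  next
    case False
    then obtain m where "a = 2 * m + 1" using oddE by blast
    then have "w = of_int4 (m, b + m, c + m, d + m) + (1/2, 1/2, 3/10, 3/10)"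
      unfolding w lattice_point_def of_int4_def by (simp add: field_simps)
    then show ?thesis unfolding int_coset_def by blast
  qed
next
  fix w assume "w \<in> int_coset (1/2, 1/2, 3/10, 3/10) \<union> int_coset (0, 0, 4/5, 4/5)"
  then obtain n1 n2 n3 n4 where
      "w = of_int4 (n1, n2, n3, n4) + (1/2, 1/2, 3/10, 3/10) \<or> w = of_int4 (n1, n2, n3, n4) + (0, 0, 4/5, 4/5)"
    unfolding int_coset_def by (metis (no_types, lifting) UnE imageE prod_cases4)
  moreover have "of_int4 (n1, n2, n3, n4) + (1/2, 1/2, 3/10, 3/10) = lattice_point (2 * n1 + 1) (n2 - n1) (n3 - n1) (n4 - n1)"
    and "of_int4 (n1, n2, n3, n4) + (0, 0, 4/5, 4/5) = lattice_point (2 * n1) (n2 - n1) (n3 - n1 + 1) (n4 - n1 + 1)"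
    by (simp_all add: of_int4_def lattice_point_def field_simps)
  ultimately show "w \<in> theta_lattice" by auto
qed

lemma int_cosets_disjoint: "int_coset (1/2, 1/2, 3/10, 3/10) \<inter> int_coset (0, 0, 4/5, 4/5) = {}"
proof -
  have "(of_int n :: real) \<noteq> of_int m + 1/2" for m n :: int
  proof
    assume "(of_int n :: real) = of_int m + 1/2"
    then have "of_int (2 * (n - m)) = (1 :: real)" by simp
    then show False by presburger
  qed
  then show ?thesis
    unfolding int_coset_def of_int4_def by auto
qed

definition theta_sum :: "complex \<Rightarrow> complex \<Rightarrow> r4 \<Rightarrow> complex" where
  "theta_sum t z c = infsum (theta_kernel t z c) theta_lattice"

lemma theta_sum_eq_coset_sums:
  assumes "Im t > 0"
  shows "theta_sum t z c = infsum (theta_kernel t z c) (int_coset (1/2, 1/2, 3/10, 3/10))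
                         + infsum (theta_kernel t z c) (int_coset (0, 0, 4/5, 4/5))"
  unfolding theta_sum_def theta_lattice_eq_Un
  by (rule infsum_Un_disjoint[OF summable_on_theta_kernel_int_coset[OF assms]
        summable_on_theta_kernel_int_coset[OF assms] int_cosets_disjoint])

lemma theta_sum_diff_eq_theta_series:
  assumes "Im t > 0"
  shows "theta_sum t z (c1, c2, c3, c4) - theta_sum t z (c1 + 1, c2, c3, c4) =
    2 * (theta_series t 0 c1 (1/2) * (theta_series t 0 c2 (1/2) * (theta_series t z c3 (3/10) * theta_series t z c4 (3/10))))"
proof -
  let ?R = "\<lambda>a. infsum (theta_kernel t z (c1, c2, c3, c4)) (int_coset a)"
  \<comment> \<open>the character \<open>e(w\<^sub>1)\<close> is \<open>-1\<close> on the half-integral coset and \<open>1\<close> on the integral one\<close>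
  have "e2pi ((1, 0, 0, 0) \<bullet> (of_int4 n + a)) = e2pi (fst a)" for n a
    by (rule e2pi_eq_if_diff_int) (cases n, cases a, simp add: of_int4_def)
  then have "e2pi ((1, 0, 0, 0) \<bullet> w) = e2pi (fst a)" if "w \<in> int_coset a" for w a
    using that unfolding int_coset_def by blast
  then have "infsum (theta_kernel t z ((c1, c2, c3, c4) + (1, 0, 0, 0))) (int_coset a) = e2pi (fst a) * ?R a" for a
    by (rule infsum_theta_kernel_add_char)
  then have "theta_sum t z (c1 + 1, c2, c3, c4) = - ?R (1/2, 1/2, 3/10, 3/10) + ?R (0, 0, 4/5, 4/5)"
    using theta_sum_eq_coset_sums[OF assms] by (simp add: e2pi_half)
  then show ?thesis
    using theta_sum_eq_coset_sums[OF assms] infsum_theta_kernel_int_coset[OF assms] by simp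
qed

lemma theta_sum_invariant:
  assumes "bij_betw g theta_lattice theta_lattice"
    and "\<And>u v. g u \<bullet> g v = u \<bullet> v" and "g (0, 0, 1, 1) = (0, 0, 1, 1)"
  shows "theta_sum t z (g c) = theta_sum t z c"
proof -
  have "theta_kernel t z (g c) (g w) = theta_kernel t z c w" for w
    unfolding theta_kernel_def by (metis assms(2,3))
  moreover have "theta_sum t z (g c) = infsum (\<lambda>w. theta_kernel t z (g c) (g w)) theta_lattice"
    unfolding theta_sum_def by (rule infsum_reindex_bij_betw[OF assms(1), symmetric])
  ultimately show ?thesis
    unfolding theta_sum_def by simp
qed

lemma theta_sum_add_int:
  assumes "even (k1 + k2 + k3 + k4)"
  shows "theta_sum t z (c + of_int4 (k1, k2, k3, k4)) = e2pi (- of_int (k3 + k4) / 5) * theta_sum t z c"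
proof -
  obtain m where "k1 + k2 + k3 + k4 = 2 * m"
    using assms by (rule evenE)
  then have m: "k1 = 2 * m - k2 - k3 - k4"
    by linarith
  have "e2pi (of_int4 (k1, k2, k3, k4) \<bullet> lattice_point a b c d) = e2pi (- of_int (k3 + k4) / 5)" for a b c d
  proof (rule e2pi_eq_if_diff_int)
    have "of_int4 (k1, k2, k3, k4) \<bullet> lattice_point a b c d - - of_int (k3 + k4) / 5
        = of_int (m * a + k2 * b + k3 * c + k4 * d)"
      unfolding m of_int4_def lattice_point_def by (simp add: algebra_simps add_divide_distrib diff_divide_distrib)
    then show "of_int4 (k1, k2, k3, k4) \<bullet> lattice_point a b c d - - of_int (k3 + k4) / 5 \<in> \<int>"
      by simp
  qed
  then show ?thesis
    unfolding theta_sum_def theta_lattice_def by (intro infsum_theta_kernel_add_char) blast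
qed

subsection \<open>Symmetries of the lattice sum\<close>

definition rho :: "r4 \<Rightarrow> r4" where
  "rho = (\<lambda>(w1, w2, w3, w4).
     ((w1 - w2 + w3 - w4) / 2, (w1 - w2 - w3 + w4) / 2, (w1 + w2 + w3 + w4) / 2, (- w1 - w2 + w3 + w4) / 2))"

definition neg1 :: "r4 \<Rightarrow> r4" where
  "neg1 = (\<lambda>(w1, w2, w3, w4). (- w1, w2, w3, w4))"

definition swap12 :: "r4 \<Rightarrow> r4" where
  "swap12 = (\<lambda>(w1, w2, w3, w4). (w2, w1, w3, w4))"

definition swap34 :: "r4 \<Rightarrow> r4" where
  "swap34 = (\<lambda>(w1, w2, w3, w4). (w1, w2, w4, w3))"

lemma rho_lattice_point: "rho (lattice_point a b c d) = lattice_point (c - b - d) (d - c) (a + b + d) d"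
  unfolding rho_def lattice_point_def by (simp add: field_simps)

lemma rho_rho_rho: "rho (rho (rho w)) = w"
  by (cases w) (simp add: rho_def field_simps)

lemma theta_sum_rho: "theta_sum t z (rho c) = theta_sum t z c"
proof (rule theta_sum_invariant)
  have "rho w \<in> theta_lattice" if "w \<in> theta_lattice" for w
    using that by (elim theta_latticeE) (simp add: rho_lattice_point)
  then show "bij_betw rho theta_lattice theta_lattice"
    by (intro bij_betw_byWitness[where f' = "rho \<circ> rho"]) (simp_all add: rho_rho_rho image_subset_iff)
  show "rho u \<bullet> rho v = u \<bullet> v" for u v
    by (cases u, cases v) (simp add: rho_def field_simps)
qed (simp add: rho_def)

lemma theta_sum_invariant_involution:
  assumes "\<And>a b c d. g (lattice_point a b c d) \<in> theta_lattice" and "\<And>w. g (g w) = w"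
    and "\<And>u v. g u \<bullet> g v = u \<bullet> v" and "g (0, 0, 1, 1) = (0, 0, 1, 1)"
  shows "theta_sum t z (g c) = theta_sum t z c"
proof (rule theta_sum_invariant[OF _ assms(3,4)])
  have "g w \<in> theta_lattice" if "w \<in> theta_lattice" for w
    using that by (elim theta_latticeE) (simp add: assms(1))
  then show "bij_betw g theta_lattice theta_lattice"
    by (intro bij_betw_byWitness[where f' = g]) (auto simp: assms(2))
qed

lemma theta_sum_neg1: "theta_sum t z (neg1 c) = theta_sum t z c"
proof (rule theta_sum_invariant_involution)
  show "neg1 (lattice_point a b c d) \<in> theta_lattice" for a b c d
    using lattice_point_in_theta_lattice[of "- a" "b + a" "c + a" "d + a"]
    by (simp add: neg1_def lattice_point_def add_ac)
qed (auto simp: neg1_def)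

lemma theta_sum_swap12: "theta_sum t z (swap12 c) = theta_sum t z c"
proof (rule theta_sum_invariant_involution)
  show "swap12 (lattice_point a b c d) \<in> theta_lattice" for a b c d
    using lattice_point_in_theta_lattice[of "2 * b + a" "- b" "c - b" "d - b"]
    by (simp add: swap12_def lattice_point_def field_simps)
qed (auto simp: swap12_def)

lemma theta_sum_swap34: "theta_sum t z (swap34 c) = theta_sum t z c"
proof (rule theta_sum_invariant_involution)
  show "swap34 (lattice_point a b c d) \<in> theta_lattice" for a b c d
    using lattice_point_in_theta_lattice[of a b d c]
    by (simp add: swap34_def lattice_point_def)
qed (auto simp: swap34_def)

lemma theta_series_relation:
  fixes t z :: complex
  assumes "Im t > 0"
  defines "A \<equiv> theta_series t 0 (1/10) (1/2)" and "B \<equiv> theta_series t 0 (3/10) (1/2)"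
    and "g \<equiv> \<lambda>k::nat. theta_series t z (real k / 10) (3/10)"
  shows "B^2 * g 1 * g 9 - A^2 * g 3 * g 7 + A * B * (g 5)^2 = 0"
proof -
  let ?D = "theta_sum t z"
  have D1: "?D (11/10, 3/10, 1/2, 1/2) = ?D (3/10, 3/10, 1/10, 9/10)"
  proof -
    have "?D (11/10, 3/10, 1/2, 1/2) = ?D ((1/10, -7/10, 1/2, 1/2) + of_int4 (1, 1, 0, 0))"
      by (simp add: of_int4_def)
    also have "\<dots> = ?D (neg1 (-1/10, -7/10, 1/2, 1/2))"
      by (simp add: theta_sum_add_int neg1_def)
    also have "\<dots> = ?D (rho (rho (3/10, 3/10, 1/10, 9/10)))"
      by (simp add: theta_sum_neg1 rho_def)
    finally show ?thesis
      by (simp only: theta_sum_rho)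
  qed
  have D2: "?D (11/10, 1/10, 3/10, 7/10) = ?D (13/10, 3/10, 1/10, 9/10)"
  proof -
    have "?D (11/10, 1/10, 3/10, 7/10) = ?D ((-9/10, 1/10, 13/10, -3/10) + of_int4 (2, 0, -1, 1))"
      by (simp add: of_int4_def)
    also have "\<dots> = ?D (neg1 (swap12 (1/10, 9/10, 13/10, -3/10)))"
      by (simp add: theta_sum_add_int neg1_def swap12_def)
    also have "\<dots> = ?D (rho (13/10, 3/10, 1/10, 9/10))"
      by (simp add: theta_sum_neg1 theta_sum_swap12 rho_def)
    finally show ?thesis
      by (simp only: theta_sum_rho)
  qed
  have D3: "?D (1/10, 3/10, 1/2, 1/2) = ?D (1/10, 1/10, 3/10, 7/10)"
  proof -
    have "?D (1/10, 3/10, 1/2, 1/2) = ?D (swap12 (rho (rho (1/10, 1/10, 7/10, 3/10))))"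
      by (simp add: swap12_def rho_def)
    also have "\<dots> = ?D (swap34 (1/10, 1/10, 3/10, 7/10))"
      by (simp add: theta_sum_swap12 theta_sum_rho swap34_def)
    finally show ?thesis
      by (simp only: theta_sum_swap34)
  qed
  have "?D (3/10, 3/10, 1/10, 9/10) - ?D (13/10, 3/10, 1/10, 9/10) = 2 * (B * (B * (g 1 * g 9)))"
    and "?D (1/10, 1/10, 3/10, 7/10) - ?D (11/10, 1/10, 3/10, 7/10) = 2 * (A * (A * (g 3 * g 7)))"
    and "?D (1/10, 3/10, 1/2, 1/2) - ?D (11/10, 3/10, 1/2, 1/2) = 2 * (A * (B * (g 5 * g 5)))"
    using theta_sum_diff_eq_theta_series[OF assms(1), of z "3/10" "3/10" "1/10" "9/10"]
      theta_sum_diff_eq_theta_series[OF assms(1), of z "1/10" "1/10" "3/10" "7/10"]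
      theta_sum_diff_eq_theta_series[OF assms(1), of z "1/10" "3/10" "1/2" "1/2"]
    by (simp_all add: A_def B_def g_def)
  then show ?thesis
    using D1 D2 D3 by algebra
qed

theorem proposition6p6:
  fixes z t :: complex
  assumes "Im t > 0"
  defines "\<zeta>5 \<equiv> exp (2 * of_real pi * \<i> / 5)"
      and "A \<equiv> theta_const 1 (1/5) t"
      and "B \<equiv> theta_const 1 (3/5) t"
      and "g \<equiv> (\<lambda>k::nat. theta_char (3/5) (real k / 5) z t)"
  shows "B^2 * g 1 * g 9 - A^2 * g 3 * g 7 + A * B * (g 5)^2 = 0 \<and>
         \<zeta>5 * A^2 * g 3 * g 9 - \<zeta>5 * B^2 * g 5 * g 7 + A * B * (g 1)^2 = 0 \<and>
         B^2 * g 1 * g 3 + \<zeta>5 * A^2 * g 5 * g 9 - \<zeta>5 * A * B * (g 7)^2 = 0 \<and>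
         A^2 * g 1 * g 5 + \<zeta>5 * B^2 * g 7 * g 9 - A * B * (g 3)^2 = 0 \<and>
         A^2 * g 1 * g 7 - B^2 * g 3 * g 5 + \<zeta>5 * A * B * (g 9)^2 = 0"
proof -
  let ?G = "\<lambda>k::nat. \<lambda>w. theta_char (3/5) (real k / 5) w t"
  have relation: "B^2 * ?G 1 w * ?G 9 w - A^2 * ?G 3 w * ?G 7 w + A * B * (?G 5 w)^2 = 0" for w
    using theta_series_relation[OF assms(1), of w]
    unfolding A_def B_def theta_const_def theta_char_eq_theta_series by simp
  note shifted = relation[of "z + of_real (real j / 5)" for j, unfolded theta_char_translate_fifth]
  have "\<zeta>5 = e2pi (1/5)"
    unfolding \<zeta>5_def e2pi_def by simp
  then have "e2pi (3/10) * \<zeta>5 = -1"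
    by (simp add: e2pi_add[symmetric] e2pi_half)
  moreover have "\<zeta>5 ^ 5 = 1"
    unfolding \<zeta>5_def by (simp add: exp_of_nat_mult[symmetric] mult_ac)
  ultimately show ?thesis
    using shifted[of 0] shifted[of 1] shifted[of 2] shifted[of 3] shifted[of 4]
    unfolding g_def by simp (intro conjI; algebra)
qed

end
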